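(* Let $M$ be a multigraph with $n$ vertices. Then $M$ is the double competition multigraph of some digraph (loops allowed) if and only if there exist an ordering $(v_1,\ldots,v_n)$ of the vertices of $M$ and a double indexed edge clique partition $\{S_{ij} \mid i,j\in[n]\}$ of $M$ such that the following condition holds: (I) for any $i,j\in[n]$, if $|A_i\cap B_j|\ge 2$, then $A_i\cap B_j = S_{ij}$, where $A_i = S_{i*}\cup T^+_i$, $S_{i*} := \bigcup_{p\in[n]} S_{ip}$, $T^+_i := \{v_b \mid a,b\in[n],\ v_i\in S_{ab}\}$, and $B_j = S_{*j}\cup T^-_j$, $S_{*j} := \bigcup_{q\in[n]} S_{qj}$, $T^-_j := \{v_a \mid a,b\in[n],\ v_j\in S_{ab}\}$.
   Context: A digraph $D$ is a pair $(V(D),A(D))$ with $A(D)$ a set of ordered pairs of vertices (arcs); an arc $(v,v)$ is a loop. $N^+_D(x)=\{v\mid (x,v)\in A(D)\}$ and $N^-_D(x)=\{v\mid (v,x)\in A(D)\}$. A multigraph $M$ (without loops) is a vertex set $V(M)$ together with a function $m_M$ assigning to each unordered pair $\{x,y\}$ of distinct vertices a nonnegative integer, the number of edges between $x$ and $y$. The double competition multigraph of a digraph $D$ is the multigraph $M$ with $V(M)=V(D)$ and $m_M(\{x,y\}) = |N^+_D(x)\cap N^+_D(y)|\cdot|N^-_D(x)\cap N^-_D(y)|$ for distinct $x,y$. A clique of $M$ is a set of vertices that are pairwise adjacent (i.e. $m_M\ge 1$ on every pair of distinct elements); the empty set and singletons count as cliques. An edge clique partition of $M$ is a family (multiset) $\mathcal{F}$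 of cliques of $M$ such that any two distinct vertices $x,y$ are contained in exactly $m_M(\{x,y\})$ members of $\mathcal{F}$; a double indexed edge clique partition $\{S_{ij}\mid i,j\in[n]\}$ is such a family indexed by pairs $(i,j)\in[n]\times[n]$ (members may be empty). $[n]=\{1,\ldots,n\}$. *)

theory Defs
  imports Main
begin

text \<open>A multigraph on vertex set V is given by a multiplicity function m on unordered
pairs; only the values m {x,y} for distinct x, y in V are relevant.\<close>

definition out_nbr :: "('a \<times> 'a) set \<Rightarrow> 'a \<Rightarrow> 'a set" where
  "out_nbr Arcs x = {v. (x, v) \<in> Arcs}"

definition in_nbr :: "('a \<times> 'a) set \<Rightarrow> 'a \<Rightarrow> 'a set" where
  "in_nbr Arcs x = {v. (v, x) \<in> Arcs}"

definition is_dcm :: "'a set \<Rightarrow> ('a set \<Rightarrow> nat) \<Rightarrow> ('a \<times> 'a) set \<Rightarrow> bool" where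
  "is_dcm V m Arcs \<longleftrightarrow> Arcs \<subseteq> V \<times> V \<and>
     (\<forall>x\<in>V. \<forall>y\<in>V. x \<noteq> y \<longrightarrow>
        m {x, y} = card (out_nbr Arcs x \<inter> out_nbr Arcs y) * card (in_nbr Arcs x \<inter> in_nbr Arcs y))"

definition is_clique :: "'a set \<Rightarrow> ('a set \<Rightarrow> nat) \<Rightarrow> 'a set \<Rightarrow> bool" where
  "is_clique V m C \<longleftrightarrow> C \<subseteq> V \<and> (\<forall>x\<in>C. \<forall>y\<in>C. x \<noteq> y \<longrightarrow> m {x, y} \<ge> 1)"

definition double_indexed_ecp :: "'a set \<Rightarrow> ('a set \<Rightarrow> nat) \<Rightarrow> nat \<Rightarrow> (nat \<Rightarrow> nat \<Rightarrow> 'a set) \<Rightarrow> bool" where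
  "double_indexed_ecp V m n S \<longleftrightarrow>
     (\<forall>i\<in>{1..n}. \<forall>j\<in>{1..n}. is_clique V m (S i j)) \<and>
     (\<forall>x\<in>V. \<forall>y\<in>V. x \<noteq> y \<longrightarrow>
        card {(i, j). i \<in> {1..n} \<and> j \<in> {1..n} \<and> x \<in> S i j \<and> y \<in> S i j} = m {x, y})"

definition T_plus :: "nat \<Rightarrow> (nat \<Rightarrow> 'a) \<Rightarrow> (nat \<Rightarrow> nat \<Rightarrow> 'a set) \<Rightarrow> nat \<Rightarrow> 'a set" where
  "T_plus n v S i = {v b | a b. a \<in> {1..n} \<and> b \<in> {1..n} \<and> v i \<in> S a b}"

definition T_minus :: "nat \<Rightarrow> (nat \<Rightarrow> 'a) \<Rightarrow> (nat \<Rightarrow> nat \<Rightarrow> 'a set) \<Rightarrow> nat \<Rightarrow> 'a set" where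
  "T_minus n v S j = {v a | a b. a \<in> {1..n} \<and> b \<in> {1..n} \<and> v j \<in> S a b}"

definition A_set :: "nat \<Rightarrow> (nat \<Rightarrow> 'a) \<Rightarrow> (nat \<Rightarrow> nat \<Rightarrow> 'a set) \<Rightarrow> nat \<Rightarrow> 'a set" where
  "A_set n v S i = (\<Union>p\<in>{1..n}. S i p) \<union> T_plus n v S i"

definition B_set :: "nat \<Rightarrow> (nat \<Rightarrow> 'a) \<Rightarrow> (nat \<Rightarrow> nat \<Rightarrow> 'a set) \<Rightarrow> nat \<Rightarrow> 'a set" where
  "B_set n v S j = (\<Union>q\<in>{1..n}. S q j) \<union> T_minus n v S j"

definition condition_I :: "nat \<Rightarrow> (nat \<Rightarrow> 'a) \<Rightarrow> (nat \<Rightarrow> nat \<Rightarrow> 'a set) \<Rightarrow> bool" where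
  "condition_I n v S \<longleftrightarrow>
     (\<forall>i\<in>{1..n}. \<forall>j\<in>{1..n}. card (A_set n v S i \<inter> B_set n v S j) \<ge> 2 \<longrightarrow>
        A_set n v S i \<inter> B_set n v S j = S i j)"

end

theory Submission
  imports Defs
begin

text \<open>Given a digraph, number its vertices and let S i j consist of the common in-neighbours
of v i that are out-neighbours of v j: two vertices lie in S i j exactly when v i is a common
out-neighbour and v j a common in-neighbour of both, so the cliques count the edges of the
double competition multigraph, and A i, B j collapse to the in-neighbourhood of v i and the
out-neighbourhood of v j, which makes (I) hold with equality everywhere.
Conversely, given the partition, draw an arc x \<rightarrow> v i for every x in A i. Then v i \<in> B j
iff v j \<in> A i, so the in-neighbours of x are the v j with x \<in> B j; hence a common out-neighbour
v i of x \<noteq> y means x, y \<in> A i, a common in-neighbour v j means x, y \<in> B j, and by (I) the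
pairs (i, j) of both kinds are exactly those with x, y \<in> S i j.\<close>

lemma card_bij_betw_preimage:
  assumes "bij_betw v I V" "X \<subseteq> V"
  shows "card {i\<in>I. v i \<in> X} = card X"
proof -
  have "v ` {i\<in>I. v i \<in> X} = X" using assms bij_betw_imp_surj_on by fastforce
  then have "bij_betw v {i\<in>I. v i \<in> X} X"
    using bij_betw_subset[OF assms(1)] by auto
  then show ?thesis by (rule bij_betw_same_card)
qed

lemma inj_on_image_Collect_Int:
  assumes "inj_on f I"
  shows "f ` {i\<in>I. P i} \<inter> f ` {i\<in>I. Q i} = f ` {i\<in>I. P i \<and> Q i}"
proof -
  have "f ` {i\<in>I. P i} \<inter> f ` {i\<in>I. Q i} = f ` ({i\<in>I. P i} \<inter> {i\<in>I. Q i})"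
    by (rule inj_on_image_Int[OF assms, symmetric]) auto
  also have "{i\<in>I. P i} \<inter> {i\<in>I. Q i} = {i\<in>I. P i \<and> Q i}" by blast
  finally show ?thesis .
qed

lemma S_subset_A_set_Int_B_set:
  assumes "i \<in> {1..n}" "j \<in> {1..n}"
  shows "S i j \<subseteq> A_set n v S i \<inter> B_set n v S j"
  using assms unfolding A_set_def B_set_def by blast

definition arc_cliques :: "('a \<times> 'a) set \<Rightarrow> (nat \<Rightarrow> 'a) \<Rightarrow> nat \<Rightarrow> nat \<Rightarrow> 'a set" where
  "arc_cliques Arcs v i j = in_nbr Arcs (v i) \<inter> out_nbr Arcs (v j)"

lemma A_set_arc_cliques_subset: "A_set n v (arc_cliques Arcs v) i \<subseteq> in_nbr Arcs (v i)"
  unfolding A_set_def T_plus_def arc_cliques_def in_nbr_def out_nbr_def by auto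

lemma B_set_arc_cliques_subset: "B_set n v (arc_cliques Arcs v) j \<subseteq> out_nbr Arcs (v j)"
  unfolding B_set_def T_minus_def arc_cliques_def in_nbr_def out_nbr_def by auto

lemma condition_I_arc_cliques: "condition_I n v (arc_cliques Arcs v)"
  unfolding condition_I_def
proof (intro ballI impI)
  fix i j assume ij: "i \<in> {1..n}" "j \<in> {1..n}"
  show "A_set n v (arc_cliques Arcs v) i \<inter> B_set n v (arc_cliques Arcs v) j = arc_cliques Arcs v i j"
  proof
    show "A_set n v (arc_cliques Arcs v) i \<inter> B_set n v (arc_cliques Arcs v) j \<subseteq> arc_cliques Arcs v i j"
      using Int_mono[OF A_set_arc_cliques_subset B_set_arc_cliques_subset] by (simp add: arc_cliques_def)
  qed (rule S_subset_A_set_Int_B_set[OF ij])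
qed

lemma card_arc_cliques_containing:
  assumes bij: "bij_betw v {1..n} V" and arcs: "Arcs \<subseteq> V \<times> V"
  shows "card {(i, j). i \<in> {1..n} \<and> j \<in> {1..n} \<and> x \<in> arc_cliques Arcs v i j \<and> y \<in> arc_cliques Arcs v i j}
       = card (out_nbr Arcs x \<inter> out_nbr Arcs y) * card (in_nbr Arcs x \<inter> in_nbr Arcs y)"
proof -
  have "{(i, j). i \<in> {1..n} \<and> j \<in> {1..n} \<and> x \<in> arc_cliques Arcs v i j \<and> y \<in> arc_cliques Arcs v i j} =
      {i\<in>{1..n}. v i \<in> out_nbr Arcs x \<inter> out_nbr Arcs y} \<times> {j\<in>{1..n}. v j \<in> in_nbr Arcs x \<inter> in_nbr Arcs y}"
    unfolding arc_cliques_def out_nbr_def in_nbr_def by auto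
  moreover have "out_nbr Arcs x \<inter> out_nbr Arcs y \<subseteq> V" "in_nbr Arcs x \<inter> in_nbr Arcs y \<subseteq> V"
    using arcs unfolding out_nbr_def in_nbr_def by auto
  ultimately show ?thesis
    by (simp only: card_cartesian_product card_bij_betw_preimage[OF bij])
qed

lemma double_indexed_ecp_arc_cliques:
  assumes bij: "bij_betw v {1..n} V" and dcm: "is_dcm V m Arcs"
  shows "double_indexed_ecp V m n (arc_cliques Arcs v)"
proof -
  have arcs: "Arcs \<subseteq> V \<times> V" using dcm unfolding is_dcm_def by blast
  let ?P = "\<lambda>x y. {(i, j). i \<in> {1..n} \<and> j \<in> {1..n} \<and> x \<in> arc_cliques Arcs v i j \<and> y \<in> arc_cliques Arcs v i j}"
  have count: "card (?P x y) = m {x, y}" if "x \<in> V" "y \<in> V" "x \<noteq> y" for x y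
    using dcm that card_arc_cliques_containing[OF bij arcs] unfolding is_dcm_def by simp
  have subset: "arc_cliques Arcs v i j \<subseteq> V" for i j
    using arcs unfolding arc_cliques_def in_nbr_def by auto
  have "is_clique V m (arc_cliques Arcs v i j)" if ij: "i \<in> {1..n}" "j \<in> {1..n}" for i j
    unfolding is_clique_def
  proof (intro conjI ballI impI subset)
    fix x y assume xy: "x \<in> arc_cliques Arcs v i j" "y \<in> arc_cliques Arcs v i j" "x \<noteq> y"
    have "?P x y \<noteq> {}" using ij xy by blast
    moreover have "finite (?P x y)"
      by (rule finite_subset[of _ "{1..n} \<times> {1..n}"]) auto
    ultimately have "card (?P x y) > 0" by (simp add: card_gt_0_iff)
    moreover have "card (?P x y) = m {x, y}" using count xy subset by blast
    ultimately show "1 \<le> m {x, y}" by simp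
  qed
  then show ?thesis unfolding double_indexed_ecp_def using count by blast
qed

definition partition_arcs :: "nat \<Rightarrow> (nat \<Rightarrow> 'a) \<Rightarrow> (nat \<Rightarrow> nat \<Rightarrow> 'a set) \<Rightarrow> ('a \<times> 'a) set" where
  "partition_arcs n v S = {(x, v i) | x i. i \<in> {1..n} \<and> x \<in> A_set n v S i}"

lemma A_set_subset_image:
  assumes "\<forall>i\<in>{1..n}. \<forall>j\<in>{1..n}. S i j \<subseteq> v ` {1..n}" and "i \<in> {1..n}"
  shows "A_set n v S i \<subseteq> v ` {1..n}"
  using assms unfolding A_set_def T_plus_def by blast

lemma vertex_in_B_set_iff:
  assumes inj: "inj_on v {1..n}" and ij: "i \<in> {1..n}" "j \<in> {1..n}"
  shows "v i \<in> B_set n v S j \<longleftrightarrow> v j \<in> A_set n v S i"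
proof -
  have "v i \<in> T_minus n v S j \<longleftrightarrow> (\<exists>b\<in>{1..n}. v j \<in> S i b)"
    using inj ij unfolding T_minus_def by (auto simp: inj_on_eq_iff) blast
  moreover have "v j \<in> T_plus n v S i \<longleftrightarrow> (\<exists>a\<in>{1..n}. v i \<in> S a j)"
    using inj ij unfolding T_plus_def by (auto simp: inj_on_eq_iff) blast
  ultimately show ?thesis using ij unfolding A_set_def B_set_def by blast
qed

lemma out_nbr_partition_arcs:
  "out_nbr (partition_arcs n v S) x = v ` {i\<in>{1..n}. x \<in> A_set n v S i}"
  unfolding out_nbr_def partition_arcs_def by auto

lemma in_nbr_partition_arcs:
  assumes inj: "inj_on v {1..n}" and S: "\<forall>i\<in>{1..n}. \<forall>j\<in>{1..n}. S i j \<subseteq> v ` {1..n}"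
    and k: "k \<in> {1..n}"
  shows "in_nbr (partition_arcs n v S) (v k) = v ` {j\<in>{1..n}. v k \<in> B_set n v S j}"
proof -
  have "in_nbr (partition_arcs n v S) (v k) = A_set n v S k"
    using inj k unfolding in_nbr_def partition_arcs_def by (auto simp: inj_on_eq_iff)
  also have "\<dots> = v ` {j\<in>{1..n}. v j \<in> A_set n v S k}"
    using A_set_subset_image[OF S k] by blast
  also have "\<dots> = v ` {j\<in>{1..n}. v k \<in> B_set n v S j}"
    using vertex_in_B_set_iff[OF inj k] by auto
  finally show ?thesis .
qed

lemma cliques_containing_eq_product:
  assumes S: "\<forall>i\<in>{1..n}. \<forall>j\<in>{1..n}. S i j \<subseteq> v ` {1..n}"
    and I: "condition_I n v S" and "x \<noteq> y"
  shows "{(i, j). i \<in> {1..n} \<and> j \<in> {1..n} \<and> x \<in> S i j \<and> y \<in> S i j} =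
     {i\<in>{1..n}. x \<in> A_set n v S i \<and> y \<in> A_set n v S i} \<times> {j\<in>{1..n}. x \<in> B_set n v S j \<and> y \<in> B_set n v S j}"
proof (intro set_eqI iffI)
  fix z assume "z \<in> {(i, j). i \<in> {1..n} \<and> j \<in> {1..n} \<and> x \<in> S i j \<and> y \<in> S i j}"
  then obtain i j where "z = (i, j)" "i \<in> {1..n}" "j \<in> {1..n}" "x \<in> S i j" "y \<in> S i j"
    by blast
  then show "z \<in> {i\<in>{1..n}. x \<in> A_set n v S i \<and> y \<in> A_set n v S i} \<times> {j\<in>{1..n}. x \<in> B_set n v S j \<and> y \<in> B_set n v S j}"
    using S_subset_A_set_Int_B_set[of i n j S v] by blast
next
  fix z assume "z \<in> {i\<in>{1..n}. x \<in> A_set n v S i \<and> y \<in> A_set n v S i} \<times> {j\<in>{1..n}. x \<in> B_set n v S j \<and> y \<in> B_set n v S j}"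
  then obtain i j where z: "z = (i, j)" "i \<in> {1..n}" "j \<in> {1..n}"
    and xy: "{x, y} \<subseteq> A_set n v S i \<inter> B_set n v S j" by auto
  have "finite (A_set n v S i \<inter> B_set n v S j)"
    by (intro finite_Int disjI1 finite_subset[OF A_set_subset_image[OF S z(2)]] finite_imageI finite_atLeastAtMost)
  then have "card {x, y} \<le> card (A_set n v S i \<inter> B_set n v S j)"
    using xy by (rule card_mono)
  then have "A_set n v S i \<inter> B_set n v S j = S i j"
    using I z \<open>x \<noteq> y\<close> unfolding condition_I_def by simp
  then show "z \<in> {(i, j). i \<in> {1..n} \<and> j \<in> {1..n} \<and> x \<in> S i j \<and> y \<in> S i j}"
    using z xy by auto
qed

lemma is_dcm_partition_arcs:
  assumes bij: "bij_betw v {1..n} V" and ecp: "double_indexed_ecp V m n S" and I: "condition_I n v S"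
  shows "is_dcm V m (partition_arcs n v S)"
proof -
  have inj: "inj_on v {1..n}" and V: "V = v ` {1..n}"
    using bij by (auto simp: bij_betw_def)
  have S: "\<forall>i\<in>{1..n}. \<forall>j\<in>{1..n}. S i j \<subseteq> v ` {1..n}"
    using ecp V unfolding double_indexed_ecp_def is_clique_def by simp
  let ?D = "partition_arcs n v S"
  have arcs: "?D \<subseteq> V \<times> V"
    using A_set_subset_image[OF S] V unfolding partition_arcs_def by blast
  have card_image_range: "card (v ` {i\<in>{1..n}. P i}) = card {i\<in>{1..n}. P i}" for P
    using inj by (intro card_image) (auto intro: inj_on_subset)
  have "m {x, y} = card (out_nbr ?D x \<inter> out_nbr ?D y) * card (in_nbr ?D x \<inter> in_nbr ?D y)"
    if xy: "x \<in> V" "y \<in> V" "x \<noteq> y" for x y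
  proof -
    have common_out: "out_nbr ?D x \<inter> out_nbr ?D y = v ` {i\<in>{1..n}. x \<in> A_set n v S i \<and> y \<in> A_set n v S i}"
      unfolding out_nbr_partition_arcs by (rule inj_on_image_Collect_Int[OF inj])
    obtain k l where "k \<in> {1..n}" "l \<in> {1..n}" "x = v k" "y = v l" using xy V by blast
    then have "in_nbr ?D x \<inter> in_nbr ?D y = v ` {j\<in>{1..n}. x \<in> B_set n v S j} \<inter> v ` {j\<in>{1..n}. y \<in> B_set n v S j}"
      using in_nbr_partition_arcs[OF inj S] by simp
    also have "\<dots> = v ` {j\<in>{1..n}. x \<in> B_set n v S j \<and> y \<in> B_set n v S j}"
      by (rule inj_on_image_Collect_Int[OF inj])
    finally have common_in: "in_nbr ?D x \<inter> in_nbr ?D y = \<dots>" .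
    have "m {x, y} = card {(i, j). i \<in> {1..n} \<and> j \<in> {1..n} \<and> x \<in> S i j \<and> y \<in> S i j}"
      using ecp xy unfolding double_indexed_ecp_def by simp
    also have "\<dots> = card {i\<in>{1..n}. x \<in> A_set n v S i \<and> y \<in> A_set n v S i}
                   * card {j\<in>{1..n}. x \<in> B_set n v S j \<and> y \<in> B_set n v S j}"
      unfolding cliques_containing_eq_product[OF S I \<open>x \<noteq> y\<close>] by (rule card_cartesian_product)
    also have "\<dots> = card (out_nbr ?D x \<inter> out_nbr ?D y) * card (in_nbr ?D x \<inter> in_nbr ?D y)"
      by (simp only: common_out common_in card_image_range)
    finally show ?thesis .
  qed
  then show ?thesis unfolding is_dcm_def using arcs by blast
qed

theorem theorem1:
  fixes V :: "'a set" and m :: "'a set \<Rightarrow> nat" and n :: nat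
  assumes "finite V" and "card V = n"
  shows "(\<exists>Arcs. is_dcm V m Arcs) \<longleftrightarrow>
         (\<exists>v S. bij_betw v {1..n} V \<and> double_indexed_ecp V m n S \<and> condition_I n v S)"
proof
  assume "\<exists>Arcs. is_dcm V m Arcs"
  then obtain Arcs where "is_dcm V m Arcs" ..
  moreover obtain v where "bij_betw v {1..n} V"
    using ex_bij_betw_nat_finite_1[OF assms(1)] assms(2) by auto
  ultimately show "\<exists>v S. bij_betw v {1..n} V \<and> double_indexed_ecp V m n S \<and> condition_I n v S"
    using double_indexed_ecp_arc_cliques condition_I_arc_cliques by blast
next
  assume "\<exists>v S. bij_betw v {1..n} V \<and> double_indexed_ecp V m n S \<and> condition_I n v S"
  then show "\<exists>Arcs. is_dcm V m Arcs"
    using is_dcm_partition_arcs by blast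
qed

end
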